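(* Let $\Omega$ be a non-empty bounded open subset of $\mathbf{R}^2$ and let $\beta:\Omega\to\mathbf{R}$ be a $C^1$ function. Assume there exists a $C^1$ function $\alpha:\Omega\to\mathbf{R}$ such that $\alpha_x\beta_y-\alpha_y\beta_x$ vanishes at no point of $\Omega$. Then for any $u\in C^1(\Omega)\cap C^0(\overline{\Omega})$ satisfying $\beta_yu_x-\beta_xu_y=0$ in $\Omega$, one has $\sup_\Omega u=\sup_{\partial\Omega}u$ and $\inf_\Omega u=\inf_{\partial\Omega}u$. *)

theory Defs
  imports "HOL-Analysis.Analysis"
begin

definition C1_on :: "(real \<times> real) set \<Rightarrow> (real \<times> real \<Rightarrow> real) \<Rightarrow> bool" where
  "C1_on S f \<longleftrightarrow> (\<exists>f'. (\<forall>p\<in>S. (f has_derivative blinfun_apply (f' p)) (at p))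
                        \<and> continuous_on S f')"

definition dx :: "(real \<times> real \<Rightarrow> real) \<Rightarrow> real \<times> real \<Rightarrow> real" where
  "dx f p = frechet_derivative f (at p) (1, 0)"

definition dy :: "(real \<times> real \<Rightarrow> real) \<Rightarrow> real \<times> real \<Rightarrow> real" where
  "dy f p = frechet_derivative f (at p) (0, 1)"

end

theory Submission
  imports Defs
begin

text \<open>The map \<open>\<Phi> = (\<alpha>, \<beta>)\<close> is a local diffeomorphism, and the equation says that the
  derivative of \<open>u\<close> vanishes on the kernel of the derivative of \<open>\<beta>\<close>. Hence near every
  point \<open>q\<close> the function \<open>u\<close> is constant along the curve \<open>t \<mapsto> \<Phi>\<^sup>-\<^sup>1(\<Phi> q + (t, 0))\<close>,
  on which \<open>\<alpha>\<close> strictly increases. If the maximum of \<open>u\<close> over the closure were attained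
  only in \<open>\<Omega>\<close>, the set where it is attained would be a compact subset of \<open>\<Omega>\<close>; at a point
  of it maximising \<open>\<alpha>\<close> we could move along that curve and increase \<open>\<alpha>\<close> without leaving
  the set, a contradiction. The minimum is handled by applying this to \<open>-u\<close>.\<close>

lemma blinfun_apply_real_pair:
  fixes L :: "(real \<times> real) \<Rightarrow>\<^sub>L real"
  shows "L v = fst v * L (1, 0) + snd v * L (0, 1)"
proof -
  have "v = fst v *\<^sub>R (1, 0) + snd v *\<^sub>R (0, 1)" by (cases v) auto
  then have "L v = L (fst v *\<^sub>R (1, 0) + snd v *\<^sub>R (0, 1))" by (rule arg_cong)
  also have "\<dots> = fst v * L (1, 0) + snd v * L (0, 1)"
    unfolding blinfun.add_right blinfun.scaleR_right by simp
  finally show ?thesis .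
qed

lemma dx_eq_blinfun: "(f has_derivative blinfun_apply L) (at p) \<Longrightarrow> dx f p = L (1, 0)"
  unfolding dx_def by (simp add: frechet_derivative_at[symmetric])

lemma dy_eq_blinfun: "(f has_derivative blinfun_apply L) (at p) \<Longrightarrow> dy f p = L (0, 1)"
  unfolding dy_def by (simp add: frechet_derivative_at[symmetric])

lemma blinfun_real_pair_kernel_subset:
  fixes L M :: "(real \<times> real) \<Rightarrow>\<^sub>L real"
  assumes "M (0, 1) * L (1, 0) - M (1, 0) * L (0, 1) = 0"
    and "M (1, 0) \<noteq> 0 \<or> M (0, 1) \<noteq> 0"
    and "M v = 0"
  shows "L v = 0"
proof -
  have M: "fst v * M (1, 0) + snd v * M (0, 1) = 0"
    using assms(3) blinfun_apply_real_pair[of M v] by simp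
  have "M (1, 0) * L v = L (1, 0) * (fst v * M (1, 0) + snd v * M (0, 1))
          - snd v * (M (0, 1) * L (1, 0) - M (1, 0) * L (0, 1))"
   and "M (0, 1) * L v = L (0, 1) * (fst v * M (1, 0) + snd v * M (0, 1))
          + fst v * (M (0, 1) * L (1, 0) - M (1, 0) * L (0, 1))"
    by (simp_all add: blinfun_apply_real_pair[of L v] algebra_simps)
  with M assms(1,2) show ?thesis by auto
qed

definition blinfun_pair ::
    "('a::real_normed_vector \<Rightarrow>\<^sub>L real) \<Rightarrow> ('a \<Rightarrow>\<^sub>L real) \<Rightarrow> 'a \<Rightarrow>\<^sub>L (real \<times> real)"
  where "blinfun_pair L M = (blinfun_scaleR_left (1, 0) o\<^sub>L L) + (blinfun_scaleR_left (0, 1) o\<^sub>L M)"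

lemma blinfun_pair_apply [simp]: "blinfun_pair L M v = (L v, M v)"
  by (simp add: blinfun_pair_def plus_blinfun.rep_eq)

lemma continuous_on_blinfun_pair [continuous_intros]:
  "continuous_on S L \<Longrightarrow> continuous_on S M \<Longrightarrow> continuous_on S (\<lambda>p. blinfun_pair (L p) (M p))"
  unfolding blinfun_pair_def by (intro continuous_intros)

lemma has_derivative_blinfun_pair:
  assumes "(f has_derivative blinfun_apply L) (at x within s)"
    and "(g has_derivative blinfun_apply M) (at x within s)"
  shows "((\<lambda>p. (f p, g p)) has_derivative blinfun_apply (blinfun_pair L M)) (at x within s)"
proof -
  have "blinfun_apply (blinfun_pair L M) = (\<lambda>v. (L v, M v))" by auto
  with has_derivative_Pair[OF assms] show ?thesis by simp
qed

lemma blinfun_pair_left_inverse: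
  fixes L M :: "(real \<times> real) \<Rightarrow>\<^sub>L real"
  assumes "L (1, 0) * M (0, 1) - L (0, 1) * M (1, 0) \<noteq> 0"
  obtains G where "G o\<^sub>L blinfun_pair L M = id_blinfun"
proof -
  have "v = 0" if "blinfun_pair L M v = 0" for v
  proof -
    have "fst v * L (1, 0) + snd v * L (0, 1) = 0" "fst v * M (1, 0) + snd v * M (0, 1) = 0"
      using that blinfun_apply_real_pair[of L v] blinfun_apply_real_pair[of M v]
      by (simp_all add: prod_eq_iff)
    moreover have
      "fst v * (L (1, 0) * M (0, 1) - L (0, 1) * M (1, 0))
        = M (0, 1) * (fst v * L (1, 0) + snd v * L (0, 1))
          - L (0, 1) * (fst v * M (1, 0) + snd v * M (0, 1))"
      "snd v * (L (1, 0) * M (0, 1) - L (0, 1) * M (1, 0))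
        = L (1, 0) * (fst v * M (1, 0) + snd v * M (0, 1))
          - M (1, 0) * (fst v * L (1, 0) + snd v * L (0, 1))"
      by (simp_all add: algebra_simps)
    ultimately have "fst v * (L (1, 0) * M (0, 1) - L (0, 1) * M (1, 0)) = 0"
      and "snd v * (L (1, 0) * M (0, 1) - L (0, 1) * M (1, 0)) = 0"
      by simp_all
    with assms show ?thesis by (simp add: prod_eq_iff)
  qed
  moreover have lin: "linear (blinfun_pair L M)"
    by (rule bounded_linear.linear[OF blinfun.bounded_linear_right])
  ultimately have "inj (blinfun_pair L M)"
    using linear_injective_0 by blast
  then obtain g where g: "linear g" "g \<circ> blinfun_pair L M = id"
    using linear_injective_left_inverse[OF lin] by blast
  then have "bounded_linear g" by (simp add: linear_conv_bounded_linear)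
  show ?thesis
  proof
    show "Blinfun g o\<^sub>L blinfun_pair L M = id_blinfun"
    proof (rule blinfun_eqI)
      fix v
      show "blinfun_apply (Blinfun g o\<^sub>L blinfun_pair L M) v = blinfun_apply id_blinfun v"
        using pointfree_idE[OF g(2), of v] \<open>bounded_linear g\<close>
        by (simp add: bounded_linear_Blinfun_apply)
    qed
  qed
qed

lemma exists_greater_on_level_set:
  fixes \<alpha> \<beta> u :: "real \<times> real \<Rightarrow> real" and A B U :: "real \<times> real \<Rightarrow> (real \<times> real) \<Rightarrow>\<^sub>L real"
  assumes "open \<Omega>" and "q \<in> \<Omega>"
    and dA: "\<forall>p\<in>\<Omega>. (\<alpha> has_derivative blinfun_apply (A p)) (at p)" and cA: "continuous_on \<Omega> A"
    and dB: "\<forall>p\<in>\<Omega>. (\<beta> has_derivative blinfun_apply (B p)) (at p)" and cB: "continuous_on \<Omega> B"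
    and det: "A q (1, 0) * B q (0, 1) - A q (0, 1) * B q (1, 0) \<noteq> 0"
    and dU: "\<forall>p\<in>\<Omega>. (u has_derivative blinfun_apply (U p)) (at p)"
    and ker: "\<forall>p\<in>\<Omega>. \<forall>v. B p v = 0 \<longrightarrow> U p v = 0"
  shows "\<exists>p\<in>\<Omega>. \<alpha> q < \<alpha> p \<and> u p = u q"
proof -
  define \<Phi> where "\<Phi> p = (\<alpha> p, \<beta> p)" for p
  define \<Phi>' where "\<Phi>' p = blinfun_pair (A p) (B p)" for p
  have d\<Phi>: "(\<Phi> has_derivative blinfun_apply (\<Phi>' p)) (at p)" if "p \<in> \<Omega>" for p
    unfolding \<Phi>_def \<Phi>'_def using dA dB that by (intro has_derivative_blinfun_pair) auto
  have c\<Phi>: "continuous_on \<Omega> \<Phi>'"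
    unfolding \<Phi>'_def using cA cB by (intro continuous_intros)
  obtain G where G: "G o\<^sub>L \<Phi>' q = id_blinfun"
    using blinfun_pair_left_inverse[OF det] unfolding \<Phi>'_def by blast
  obtain U' V g g' where "U' \<subseteq> \<Omega>" "q \<in> U'" "open V" "\<Phi> q \<in> V"
    and hom: "homeomorphism U' V \<Phi> g"
    and dg: "\<And>y. y \<in> V \<Longrightarrow> (g has_derivative g' y) (at y)"
    and g': "\<And>y. y \<in> V \<Longrightarrow> g' y = inv (\<Phi>' (g y))"
    and bij: "\<And>y. y \<in> V \<Longrightarrow> bij (\<Phi>' (g y))"
    by (rule inverse_function_theorem[OF \<open>open \<Omega>\<close> d\<Phi> c\<Phi> \<open>q \<in> \<Omega>\<close> G]) blast+
  have g_in: "g y \<in> \<Omega>" and \<Phi>_g: "\<Phi> (g y) = y" if "y \<in> V" for y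
    using hom that \<open>U' \<subseteq> \<Omega>\<close> unfolding homeomorphism_def by auto
  have g_\<Phi>: "g (\<Phi> q) = q"
    using hom \<open>q \<in> U'\<close> unfolding homeomorphism_def by auto
  obtain e where "e > 0" and e: "ball (\<Phi> q) e \<subseteq> V"
    using \<open>open V\<close> \<open>\<Phi> q \<in> V\<close> open_contains_ball by blast
  define c where "c t = \<Phi> q + (t, 0)" for t :: real
  have c_in: "c t \<in> V" if "t \<in> {0..e/2}" for t
    using that \<open>e > 0\<close> e by (auto simp: c_def dist_norm norm_Pair)
  have \<beta>_level: "B (g y) (g' y (h, 0)) = 0" if "y \<in> V" for y h
  proof -
    have "\<Phi>' (g y) (g' y (h, 0)) = (h, 0)"
      using bij[OF that] unfolding g'[OF that] by (meson bij_inv_eq_iff)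
    then show ?thesis by (simp add: \<Phi>'_def)
  qed
  have "((\<lambda>t. u (g (c t))) has_derivative (\<lambda>h. 0)) (at t within {0..e/2})"
    if t: "t \<in> {0..e/2}" for t
  proof -
    have dc: "(c has_derivative (\<lambda>h. (h, 0))) (at t)"
      unfolding c_def by (auto intro!: derivative_eq_intros)
    have dgc: "((g \<circ> c) has_derivative (g' (c t) \<circ> (\<lambda>h. (h, 0)))) (at t)"
      by (rule diff_chain_at[OF dc dg[OF c_in[OF t]]])
    have du: "((u \<circ> (g \<circ> c)) has_derivative (U (g (c t)) \<circ> (g' (c t) \<circ> (\<lambda>h. (h, 0))))) (at t)"
      by (rule diff_chain_at[OF dgc]) (use dU g_in[OF c_in[OF t]] in auto)
    have "U (g (c t)) \<circ> (g' (c t) \<circ> (\<lambda>h. (h, 0))) = (\<lambda>h. 0)"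
      using ker[rule_format, OF g_in[OF c_in[OF t]] \<beta>_level[OF c_in[OF t]]]
      by (simp add: fun_eq_iff)
    with du show ?thesis
      unfolding comp_def by (metis has_derivative_at_withinI)
  qed
  then have "u (g (c 0)) = u (g (c (e/2)))"
    by (rule has_derivative_zero_unique[OF convex_real_interval(5)]) (use \<open>e > 0\<close> in auto)
  moreover have "g (c 0) = q"
    using g_\<Phi> by (simp add: c_def zero_prod_def[symmetric])
  moreover have "\<alpha> (g (c (e/2))) = \<alpha> q + e/2"
    using \<Phi>_g[OF c_in, of "e/2"] \<open>e > 0\<close> by (simp add: c_def \<Phi>_def prod_eq_iff)
  ultimately show ?thesis
    using g_in[OF c_in, of "e/2"] \<open>e > 0\<close> by (intro bexI[of _ "g (c (e/2))"]) auto
qed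

lemma C1_on_imp_continuous_on:
  assumes "C1_on S f"
  shows "continuous_on S f"
proof -
  obtain f' where "\<forall>p\<in>S. (f has_derivative blinfun_apply (f' p)) (at p)"
    using assms unfolding C1_on_def by blast
  then show ?thesis
    by (intro has_derivative_continuous_on) (auto intro: has_derivative_at_withinI)
qed

lemma C1_exists_greater_on_level_set:
  fixes \<alpha> \<beta> u :: "real \<times> real \<Rightarrow> real"
  assumes "open \<Omega>" and "q \<in> \<Omega>" and "C1_on \<Omega> \<alpha>" and "C1_on \<Omega> \<beta>" and "C1_on \<Omega> u"
    and jac: "\<forall>p\<in>\<Omega>. dx \<alpha> p * dy \<beta> p - dy \<alpha> p * dx \<beta> p \<noteq> 0"
    and pde: "\<forall>p\<in>\<Omega>. dy \<beta> p * dx u p - dx \<beta> p * dy u p = 0"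
  shows "\<exists>p\<in>\<Omega>. \<alpha> q < \<alpha> p \<and> u p = u q"
proof -
  obtain A where dA: "\<forall>p\<in>\<Omega>. (\<alpha> has_derivative blinfun_apply (A p)) (at p)"
    and cA: "continuous_on \<Omega> A"
    using \<open>C1_on \<Omega> \<alpha>\<close> unfolding C1_on_def by blast
  obtain B where dB: "\<forall>p\<in>\<Omega>. (\<beta> has_derivative blinfun_apply (B p)) (at p)"
    and cB: "continuous_on \<Omega> B"
    using \<open>C1_on \<Omega> \<beta>\<close> unfolding C1_on_def by blast
  obtain U where dU: "\<forall>p\<in>\<Omega>. (u has_derivative blinfun_apply (U p)) (at p)"
    using \<open>C1_on \<Omega> u\<close> unfolding C1_on_def by blast
  have partials: "dx \<alpha> p = A p (1, 0)" "dy \<alpha> p = A p (0, 1)"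
    "dx \<beta> p = B p (1, 0)" "dy \<beta> p = B p (0, 1)" "dx u p = U p (1, 0)" "dy u p = U p (0, 1)"
    if "p \<in> \<Omega>" for p
    using dA dB dU that by (metis dx_eq_blinfun dy_eq_blinfun)+
  have det: "A p (1, 0) * B p (0, 1) - A p (0, 1) * B p (1, 0) \<noteq> 0" if "p \<in> \<Omega>" for p
    using jac that by (simp add: partials)
  have "U p v = 0" if "p \<in> \<Omega>" "B p v = 0" for p v
  proof (rule blinfun_real_pair_kernel_subset[OF _ _ \<open>B p v = 0\<close>])
    show "B p (0, 1) * U p (1, 0) - B p (1, 0) * U p (0, 1) = 0"
      using pde \<open>p \<in> \<Omega>\<close> by (simp add: partials)
    show "B p (1, 0) \<noteq> 0 \<or> B p (0, 1) \<noteq> 0"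
      using det[OF \<open>p \<in> \<Omega>\<close>] by auto
  qed
  then have ker: "\<forall>p\<in>\<Omega>. \<forall>v. B p v = 0 \<longrightarrow> U p v = 0" by blast
  show ?thesis
    by (rule exists_greater_on_level_set[OF \<open>open \<Omega>\<close> \<open>q \<in> \<Omega>\<close> dA cA dB cB det[OF \<open>q \<in> \<Omega>\<close>] dU ker])
qed

lemma exists_frontier_maximum:
  fixes \<Omega> :: "'a::heine_borel set" and \<alpha> u :: "'a \<Rightarrow> real"
  assumes "\<Omega> \<noteq> {}" and "bounded \<Omega>" and "open \<Omega>"
    and "continuous_on \<Omega> \<alpha>" and cu: "continuous_on (closure \<Omega>) u"
    and escape: "\<forall>q\<in>\<Omega>. \<exists>p\<in>\<Omega>. \<alpha> q < \<alpha> p \<and> u p = u q"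
  shows "\<exists>z\<in>frontier \<Omega>. \<forall>p\<in>closure \<Omega>. u p \<le> u z"
proof (rule ccontr)
  assume no_max: "\<not> ?thesis"
  have "compact (closure \<Omega>)"
    using \<open>bounded \<Omega>\<close> by simp
  then obtain m where m: "m \<in> closure \<Omega>" "\<forall>p\<in>closure \<Omega>. u p \<le> u m"
    using continuous_attains_sup[OF _ _ cu] \<open>\<Omega> \<noteq> {}\<close> by blast
  define K where "K = {p \<in> closure \<Omega>. u p = u m}"
  have "K \<subseteq> \<Omega>"
  proof
    fix p assume "p \<in> K"
    with m no_max have "p \<in> closure \<Omega>" "p \<notin> frontier \<Omega>"
      unfolding K_def by auto
    then show "p \<in> \<Omega>"
      using \<open>open \<Omega>\<close> by (simp add: frontier_def interior_open)
  qed
  have "closed K"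
    unfolding K_def by (rule continuous_closed_preimage_constant[OF cu closed_closure])
  moreover have "bounded K"
    using \<open>bounded \<Omega>\<close> \<open>K \<subseteq> \<Omega>\<close> by (rule bounded_subset)
  ultimately have "compact K"
    by (simp add: compact_eq_bounded_closed)
  moreover have "K \<noteq> {}" using m unfolding K_def by blast
  moreover have "continuous_on K \<alpha>"
    using \<open>continuous_on \<Omega> \<alpha>\<close> \<open>K \<subseteq> \<Omega>\<close> by (rule continuous_on_subset)
  ultimately obtain q where q: "q \<in> K" "\<forall>p\<in>K. \<alpha> p \<le> \<alpha> q"
    using continuous_attains_sup by blast
  then obtain p where p: "p \<in> \<Omega>" "\<alpha> q < \<alpha> p" "u p = u q"
    using escape \<open>K \<subseteq> \<Omega>\<close> by blast
  then have "p \<in> K"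
    using q(1) closure_subset unfolding K_def by auto
  with q(2) p(2) show False by (simp add: not_le[symmetric])
qed

lemma SUP_eq_SUP_frontier:
  fixes u :: "'a::topological_space \<Rightarrow> real"
  assumes cu: "continuous_on (closure S) u"
    and z: "z \<in> frontier S" and max: "\<forall>p\<in>closure S. u p \<le> u z"
  shows "(SUP p\<in>S. u p) = (SUP p\<in>frontier S. u p)"
proof -
  have z_closure: "z \<in> closure S" and "S \<noteq> {}"
    using z by (auto simp: frontier_def)
  have "(SUP p\<in>frontier S. u p) = u z"
    using z max by (intro cSup_eq_maximum) (auto simp: frontier_def)
  moreover have "(SUP p\<in>S. u p) = u z"
  proof (rule antisym)
    show "(SUP p\<in>S. u p) \<le> u z"
      using max closure_subset \<open>S \<noteq> {}\<close> by (intro cSUP_least) auto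
    have "bdd_above (u ` S)"
      using max closure_subset by (intro bdd_aboveI2[of _ _ "u z"]) auto
    then have "u ` closure S \<subseteq> {..(SUP p\<in>S. u p)}"
      by (intro image_closure_subset[OF cu]) (auto intro: cSUP_upper)
    then show "u z \<le> (SUP p\<in>S. u p)"
      using z_closure by auto
  qed
  ultimately show ?thesis by simp
qed

lemma INF_eq_INF_frontier:
  fixes u :: "'a::topological_space \<Rightarrow> real"
  assumes "continuous_on (closure S) u"
    and "z \<in> frontier S" and "\<forall>p\<in>closure S. u z \<le> u p"
  shows "(INF p\<in>S. u p) = (INF p\<in>frontier S. u p)"
proof -
  have "(SUP p\<in>S. - u p) = (SUP p\<in>frontier S. - u p)"
    using assms by (intro SUP_eq_SUP_frontier) (auto intro: continuous_intros)
  then show ?thesis by (simp add: Inf_real_def image_image)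
qed

theorem theorem6:
  fixes \<Omega> :: "(real \<times> real) set"
    and \<alpha> \<beta> u :: "real \<times> real \<Rightarrow> real"
  assumes "\<Omega> \<noteq> {}" and "bounded \<Omega>" and "open \<Omega>"
    and "C1_on \<Omega> \<beta>"
    and "C1_on \<Omega> \<alpha>"
    and "\<forall>p\<in>\<Omega>. dx \<alpha> p * dy \<beta> p - dy \<alpha> p * dx \<beta> p \<noteq> 0"
    and "C1_on \<Omega> u" and "continuous_on (closure \<Omega>) u"
    and "\<forall>p\<in>\<Omega>. dy \<beta> p * dx u p - dx \<beta> p * dy u p = 0"
  shows "(SUP p\<in>\<Omega>. u p) = (SUP p\<in>frontier \<Omega>. u p) \<and>
         (INF p\<in>\<Omega>. u p) = (INF p\<in>frontier \<Omega>. u p)"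
proof -
  have escape: "\<forall>q\<in>\<Omega>. \<exists>p\<in>\<Omega>. \<alpha> q < \<alpha> p \<and> u p = u q"
    using C1_exists_greater_on_level_set assms(3-7,9) by blast
  have "continuous_on \<Omega> \<alpha>"
    using \<open>C1_on \<Omega> \<alpha>\<close> by (rule C1_on_imp_continuous_on)
  obtain zmax where "zmax \<in> frontier \<Omega>" "\<forall>p\<in>closure \<Omega>. u p \<le> u zmax"
    using exists_frontier_maximum[OF assms(1-3) \<open>continuous_on \<Omega> \<alpha>\<close> assms(8) escape] by blast
  moreover obtain zmin where "zmin \<in> frontier \<Omega>" "\<forall>p\<in>closure \<Omega>. - u p \<le> - u zmin"
    using exists_frontier_maximum[OF assms(1-3) \<open>continuous_on \<Omega> \<alpha>\<close>
        continuous_on_minus[OF assms(8)]] escape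
    by auto
  ultimately show ?thesis
    using SUP_eq_SUP_frontier[OF assms(8)] INF_eq_INF_frontier[OF assms(8)] by simp
qed

end
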